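(* In the setting of the context, for every choice of keys $k,k'$ and permutation $\sigma$, the original ciphertext $M_f^{(0)}$ and the anamorphic ciphertext $M_f^{(1)}$ are computationally indistinguishable: for every quantum circuit $C$ with a single-bit classical output, \[ \big|\Pr[C(M_f^{(0)})=1]-\Pr[C(M_f^{(1)})=1]\big|<\varepsilon . \]
   Context: Let $d_1\ge d_2\ge1$, $\mathcal H_M=(\mathbb C^2)^{\otimes d_1}$, $\mathcal H_{M_c}=(\mathbb C^2)^{\otimes d_2}$, and $U_k=\bigotimes_{j}X^{k_{2j-1}}Z^{k_{2j}}$ (Pauli $X,Z$) for bit strings $k$. $M_o$ is a strictly positive definite density matrix on $\mathcal H_M$, $M_c$ a density matrix on $\mathcal H_{M_c}$; $M_o'=U_kM_oU_k^\dagger$ ($k\in\{0,1\}^{2d_1}$), $M_c'=U_{k'}M_cU_{k'}^\dagger$ ($k'\in\{0,1\}^{2d_2}$), $V|\psi\rangle=|\psi\rangle\otimes|0\rangle^{\otimes(d_1-d_2)}$, $M_c''=VM_c'V^\dagger$. For $\eta\in\mathbb Z^+$, on $\mathbb C^2\otimes\mathcal H_M$ (blocks w.r.t. the first qubit), $M_a^{(0)}=\begin{pmatrix}\frac12M_o'&0\\0&\frac12M_o'\end{pmatrix}$, $M_a^{(1)}=\begin{pmatrix}\frac12M_o'&\frac1\eta M_c''\\\frac1\eta(M_c'')^\dagger&\frac12M_o'\end{pmatrix}$, $M_f^{(b)}=U_\sigma M_a^{(b)}U_\sigma^\dagger$ with $U_\sigma$ a $2^{d_1+1}\times2^{d_1+1}$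 permutation matrix. Standing assumption of the construction: for a given threshold $\varepsilon>0$ (written $\mathsf{negl}(\lambda)$), $\eta$ satisfies $1/\eta<\varepsilon$ and $\frac1{\eta^2}\|M_c''(M_o')^{-1}M_c''\|\le\frac14\lambda_{\min}(M_o')$ (operator norm). *)

theory Defs
  imports "Jordan_Normal_Form.Char_Poly" "HOL-Combinatorics.Permutations"
begin

definition cadj :: "complex mat \<Rightarrow> complex mat" where
  "cadj A = mat (dim_col A) (dim_row A) (\<lambda>(i,j). cnj (A $$ (j,i)))"

definition mtrace :: "complex mat \<Rightarrow> complex" where
  "mtrace A = (\<Sum>i<dim_row A. A $$ (i,i))"

text \<open>Kronecker (tensor) product; the first factor is the most significant index.\<close>
definition kron :: "complex mat \<Rightarrow> complex mat \<Rightarrow> complex mat" where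
  "kron A B = mat (dim_row A * dim_row B) (dim_col A * dim_col B)
     (\<lambda>(i,j). A $$ (i div dim_row B, j div dim_col B) * B $$ (i mod dim_row B, j mod dim_col B))"

definition pauliX :: "complex mat" where
  "pauliX = mat 2 2 (\<lambda>(i,j). if i \<noteq> j then 1 else 0)"

definition pauliZ :: "complex mat" where
  "pauliZ = mat 2 2 (\<lambda>(i,j). if i = j then (if i = 0 then 1 else -1) else 0)"

text \<open>U_k = tensor over j of X^(k_(2j-1)) Z^(k_(2j)), for a bit string k of even length
  (given as a list of booleans, k_1 first).\<close>
fun pauliU :: "bool list \<Rightarrow> complex mat" where
  "pauliU [] = 1\<^sub>m 1"
| "pauliU [a] = 1\<^sub>m 1"
| "pauliU (a # b # r) =
     kron ((if a then pauliX else 1\<^sub>m 2) * (if b then pauliZ else 1\<^sub>m 2)) (pauliU r)"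

definition qform :: "complex mat \<Rightarrow> complex vec \<Rightarrow> complex" where
  "qform A v = (\<Sum>i<dim_vec v. \<Sum>j<dim_vec v. cnj (v $ i) * A $$ (i,j) * v $ j)"

definition psd :: "nat \<Rightarrow> complex mat \<Rightarrow> bool" where
  "psd n A \<longleftrightarrow> A \<in> carrier_mat n n \<and>
     (\<forall>v \<in> carrier_vec n. Im (qform A v) = 0 \<and> Re (qform A v) \<ge> 0)"

definition pos_def :: "nat \<Rightarrow> complex mat \<Rightarrow> bool" where
  "pos_def n A \<longleftrightarrow> A \<in> carrier_mat n n \<and>
     (\<forall>v \<in> carrier_vec n. v \<noteq> 0\<^sub>v n \<longrightarrow> Im (qform A v) = 0 \<and> Re (qform A v) > 0)"

definition density :: "nat \<Rightarrow> complex mat \<Rightarrow> bool" where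
  "density n A \<longleftrightarrow> psd n A \<and> mtrace A = 1"

definition cvec_norm :: "complex vec \<Rightarrow> real" where
  "cvec_norm v = sqrt (\<Sum>i<dim_vec v. (cmod (v $ i))\<^sup>2)"

definition opnorm :: "complex mat \<Rightarrow> real" where
  "opnorm A = Sup {cvec_norm (A *\<^sub>v v) | v. v \<in> carrier_vec (dim_col A) \<and> cvec_norm v = 1}"

text \<open>Smallest eigenvalue (used for Hermitian matrices, whose eigenvalues are real).\<close>
definition lambda_min :: "complex mat \<Rightarrow> real" where
  "lambda_min A = Min {Re k | k. eigenvalue A k}"

definition minv :: "complex mat \<Rightarrow> complex mat" where
  "minv A = (THE B. B \<in> carrier_mat (dim_row A) (dim_row A) \<and>
                    A * B = 1\<^sub>m (dim_row A) \<and> B * A = 1\<^sub>m (dim_row A))"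

text \<open>Isometry V|psi> = |psi> tensor |0>^(d1-d2).\<close>
definition padV :: "nat \<Rightarrow> nat \<Rightarrow> complex mat" where
  "padV d1 d2 = mat (2^d1) (2^d2) (\<lambda>(i,j). if i = j * 2^(d1-d2) then 1 else 0)"

definition perm_mat :: "nat \<Rightarrow> (nat \<Rightarrow> nat) \<Rightarrow> complex mat" where
  "perm_mat n \<sigma> = mat n n (\<lambda>(i,j). if i = \<sigma> j then 1 else 0)"

text \<open>A quantum circuit with one-bit classical output acting on an n-dimensional state
  is described by its accepting measurement effect E, 0 <= E <= I; Pr[C(rho)=1] = tr(E rho).\<close>
definition effect :: "nat \<Rightarrow> complex mat \<Rightarrow> bool" where
  "effect n E \<longleftrightarrow> psd n E \<and> psd n (1\<^sub>m n - E)"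

definition accept_prob :: "complex mat \<Rightarrow> complex mat \<Rightarrow> real" where
  "accept_prob E \<rho> = Re (mtrace (E * \<rho>))"

end

theory Submission
  imports Defs
begin

text \<open>Conjugating by the permutation matrix \<open>P\<close> replaces the effect \<open>E\<close> by
  \<open>E' = P\<^sup>\<dagger> E P\<close>, again with \<open>0 \<le> E' \<le> I\<close>. \<open>Ma0\<close> and \<open>Ma1\<close> differ only in their
  off-diagonal blocks \<open>Mc''/\<eta>\<close>, so the advantage is \<open>|Re tr(G Mc'')|/\<eta>\<close>, where \<open>G\<close> is the sum
  of the two off-diagonal blocks of \<open>E'\<close>. Testing \<open>0 \<le> E' \<le> I\<close> on the vectors \<open>(x, x)\<close> and
  \<open>(x, -x)\<close> gives \<open>-I \<le> G \<le> I\<close>; as \<open>Mc''\<close> is a density matrix, \<open>tr((I \<plusminus> G) Mc'') \<ge> 0\<close>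
  yields \<open>|Re tr(G Mc'')| \<le> tr Mc'' = 1\<close>. Hence the advantage is at most \<open>1/\<eta> < \<epsilon>\<close>.\<close>

lemma sum_lessThan_add_split:
  "(\<Sum>k<a+b. f k) = (\<Sum>k<a. f k) + (\<Sum>k<b. f (a+k))"
  for f :: "nat \<Rightarrow> 'a::comm_monoid_add"
  by (induction b) (simp_all add: add.assoc)

lemma sum_lessThan_mult_split:
  "(\<Sum>k<a*b. f k) = (\<Sum>i<a. \<Sum>j<b. f (i*b+j))"
  for f :: "nat \<Rightarrow> 'a::comm_monoid_add"
proof (induction a)
  case (Suc a)
  have "(\<Sum>k<Suc a*b. f k) = (\<Sum>k<a*b + b. f k)" by (simp add: add.commute)
  also have "\<dots> = (\<Sum>k<a*b. f k) + (\<Sum>k<b. f (a*b+k))" by (rule sum_lessThan_add_split)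
  finally show ?case using Suc by simp
qed simp

lemma sum_square_blocks:
  "(\<Sum>a<N+N. \<Sum>b<N+N. h a b) =
     (\<Sum>a<N. \<Sum>b<N. h a b + h a (N+b) + h (N+a) b + h (N+a) (N+b))"
  for h :: "nat \<Rightarrow> nat \<Rightarrow> 'a::comm_monoid_add"
  by (simp add: sum_lessThan_add_split sum.distrib ac_simps)

section \<open>Positive semidefinite kernels\<close>

text \<open>Matrices as index functions: entries outside \<open>{..<n} \<times> {..<n}\<close> are ignored, which keeps
  the positivity arguments free of carrier bookkeeping.\<close>

definition qform_fun :: "nat \<Rightarrow> (nat \<Rightarrow> nat \<Rightarrow> complex) \<Rightarrow> (nat \<Rightarrow> complex) \<Rightarrow> complex" where
  "qform_fun n A x = (\<Sum>i<n. \<Sum>j<n. cnj (x i) * A i j * x j)"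

definition psd_fun :: "nat \<Rightarrow> (nat \<Rightarrow> nat \<Rightarrow> complex) \<Rightarrow> bool" where
  "psd_fun n A \<longleftrightarrow> (\<forall>x. Im (qform_fun n A x) = 0 \<and> Re (qform_fun n A x) \<ge> 0)"

lemma psd_funD:
  assumes "psd_fun n A"
  shows "Im (qform_fun n A x) = 0" "Re (qform_fun n A x) \<ge> 0"
  using assms unfolding psd_fun_def by auto

lemma qform_fun_cong:
  assumes "\<And>i j. i < n \<Longrightarrow> j < n \<Longrightarrow> A i j = B i j" "\<And>i. i < n \<Longrightarrow> x i = y i"
  shows "qform_fun n A x = qform_fun n B y"
  unfolding qform_fun_def using assms by (intro sum.cong refl) auto

lemma psd_fun_cong:
  "(\<And>i j. i < n \<Longrightarrow> j < n \<Longrightarrow> A i j = B i j) \<Longrightarrow> psd_fun n A = psd_fun n B"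
  unfolding psd_fun_def by (simp add: qform_fun_cong[of n A B])

lemma qform_fun_supported:
  assumes "S \<subseteq> {..<n}" "\<And>k. k \<notin> S \<Longrightarrow> x k = 0"
  shows "qform_fun n A x = (\<Sum>i\<in>S. \<Sum>j\<in>S. cnj (x i) * A i j * x j)"
proof -
  have "finite S" using assms(1) finite_subset by blast
  then have "qform_fun n A x = (\<Sum>i<n. \<Sum>j\<in>S. cnj (x i) * A i j * x j)"
    unfolding qform_fun_def
    by (intro sum.cong refl sum.mono_neutral_right) (use assms in auto)
  also have "\<dots> = (\<Sum>i\<in>S. \<Sum>j\<in>S. cnj (x i) * A i j * x j)"
    by (intro sum.mono_neutral_right) (use assms in auto)
  finally show ?thesis .
qed

lemma psd_fun_diag:
  assumes "psd_fun n A" "i < n"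
  shows "Im (A i i) = 0" "Re (A i i) \<ge> 0"
proof -
  have "qform_fun n A (\<lambda>k. if k = i then 1 else 0) = A i i"
    by (subst qform_fun_supported[of "{i}"]) (use assms in auto)
  then show "Im (A i i) = 0" "Re (A i i) \<ge> 0"
    using psd_funD[OF assms(1)] by metis+
qed

lemma psd_fun_hermitian:
  assumes "psd_fun n A" "i < n" "j < n"
  shows "A j i = cnj (A i j)"
proof (cases "i = j")
  case True
  then show ?thesis using psd_fun_diag[OF assms(1,2)] by (simp add: complex_eq_iff)
next
  case False
  have diag: "Im (A i i) = 0" "Im (A j j) = 0" using psd_fun_diag assms by auto
  have "qform_fun n A (\<lambda>k. if k = i then 1 else if k = j then 1 else 0)
        = A i i + A i j + A j i + A j j" (is "qform_fun n A ?x1 = _")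
    by (subst qform_fun_supported[of "{i,j}"]) (use assms False in auto)
  with psd_funD(1)[OF assms(1), of ?x1] have im: "Im (A i j) + Im (A j i) = 0"
    using diag by simp
  have "qform_fun n A (\<lambda>k. if k = i then 1 else if k = j then \<i> else 0)
      = A i i + \<i> * A i j - \<i> * A j i + A j j" (is "qform_fun n A ?x2 = _")
    by (subst qform_fun_supported[of "{i,j}"]) (use assms False in \<open>auto simp: algebra_simps\<close>)
  with psd_funD(1)[OF assms(1), of ?x2] have re: "Re (A i j) - Re (A j i) = 0"
    using diag by simp
  show ?thesis using im re by (simp add: complex_eq_iff)
qed

lemma qform_fun_add_delta:
  fixes x :: "nat \<Rightarrow> complex"
  assumes "psd_fun n A" "p < n"
  defines "c \<equiv> \<Sum>j<n. A p j * x j"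
  shows "qform_fun n A (\<lambda>k. x k + (if k = p then t else 0)) =
    qform_fun n A x + cnj t * c + t * cnj c + cnj t * t * A p p"
proof -
  let ?e = "\<lambda>k. if k = p then t else 0"
  have "qform_fun n A (\<lambda>k. x k + ?e k) = qform_fun n A x
      + (\<Sum>i<n. \<Sum>j<n. cnj (x i) * A i j * ?e j) + (\<Sum>i<n. \<Sum>j<n. cnj (?e i) * A i j * x j)
      + (\<Sum>i<n. \<Sum>j<n. cnj (?e i) * A i j * ?e j)"
    unfolding qform_fun_def by (simp add: sum.distrib algebra_simps)
  also have "(\<Sum>i<n. \<Sum>j<n. cnj (x i) * A i j * ?e j) = (\<Sum>i<n. cnj (x i) * A i p * t)"
    using assms(2) by (simp add: if_distrib sum.delta cong: if_cong)
  also have "\<dots> = t * cnj c"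
    unfolding c_def
    by (simp add: sum_distrib_left psd_fun_hermitian[OF assms(1) _ assms(2)] algebra_simps)
  also have "(\<Sum>i<n. \<Sum>j<n. cnj (?e i) * A i j * x j) = cnj t * c"
  proof -
    have "(\<Sum>j<n. cnj (?e i) * A i j * x j) = (if i = p then cnj t * c else 0)" for i
      by (auto simp: c_def sum_distrib_left mult.assoc)
    then show ?thesis using assms(2) by (simp add: sum.delta)
  qed
  also have "(\<Sum>i<n. \<Sum>j<n. cnj (?e i) * A i j * ?e j) = cnj t * t * A p p"
    using qform_fun_supported[of "{p}" n ?e A] assms(2) unfolding qform_fun_def by simp
  finally show ?thesis by (simp add: algebra_simps)
qed

lemma nonneg_quadratic_imp_le:
  fixes a b q :: real
  assumes "a \<ge> 0" and nonneg: "\<And>r. 0 \<le> q - 2 * r * b + r\<^sup>2 * b * a"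
  shows "b \<le> a * q"
proof (cases "a > 0")
  case True
  with nonneg[of "1/a"] show ?thesis by (simp add: field_simps power2_eq_square)
next
  case False
  with \<open>a \<ge> 0\<close> have "a = 0" by simp
  show ?thesis
  proof (rule ccontr)
    assume "\<not> b \<le> a * q"
    with \<open>a = 0\<close> have "b > 0" by simp
    with nonneg[of "(q + 1) / (2 * b)"] \<open>a = 0\<close> show False by (simp add: field_simps)
  qed
qed

lemma psd_fun_row_bound:
  assumes A: "psd_fun n A" and p: "p < n"
  shows "(cmod (\<Sum>j<n. A p j * x j))\<^sup>2 \<le> Re (A p p) * Re (qform_fun n A x)"
proof (rule nonneg_quadratic_imp_le)
  define c where "c = (\<Sum>j<n. A p j * x j)"
  have App: "A p p = of_real (Re (A p p))" using psd_fun_diag[OF A p] by (simp add: complex_eq_iff)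
  have cc: "cnj c * c = of_real ((cmod c)\<^sup>2)"
    by (metis complex_norm_square mult.commute of_real_power)
  show "0 \<le> Re (A p p)" using psd_fun_diag[OF A p] by simp
  fix r :: real
  define t where "t = - (of_real r * c)"
  have "0 \<le> Re (qform_fun n A (\<lambda>k. x k + (if k = p then t else 0)))" using psd_funD[OF A] by blast
  also have "qform_fun n A (\<lambda>k. x k + (if k = p then t else 0)) =
      qform_fun n A x - 2 * of_real r * (cnj c * c) + of_real (r\<^sup>2) * (cnj c * c) * A p p"
    unfolding qform_fun_add_delta[OF A p] c_def[symmetric] t_def
    by (simp add: algebra_simps power2_eq_square)
  finally show "0 \<le> Re (qform_fun n A x) - 2 * r * (cmod c)\<^sup>2 + r\<^sup>2 * (cmod c)\<^sup>2 * Re (A p p)"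
    by (subst (asm) App) (simp add: cc del: of_real_power)
qed

lemma psd_fun_zero_diag_row:
  assumes A: "psd_fun n A" and "p < n" "j < n" and "A p p = 0"
  shows "A p j = 0" "A j p = 0"
proof -
  have "(cmod (\<Sum>l<n. A p l * (if l = j then 1 else 0)))\<^sup>2 \<le> 0"
    using psd_fun_row_bound[OF A \<open>p < n\<close>, of "\<lambda>l. if l = j then 1 else 0"] assms(4) by simp
  with \<open>j < n\<close> show "A p j = 0" by (simp add: if_distrib cong: if_cong)
  then show "A j p = 0" using psd_fun_hermitian[OF A \<open>p < n\<close> \<open>j < n\<close>] by simp
qed

lemma psd_fun_deflate:
  assumes A: "psd_fun n A" and p: "p < n" and pos: "Re (A p p) > 0"
    and v_def: "\<And>i. v i = A i p / of_real (sqrt (Re (A p p)))"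
  shows "psd_fun n (\<lambda>i j. A i j - v i * cnj (v j))"
    and "\<And>j. j < n \<Longrightarrow> A p j = v p * cnj (v j)"
    and "\<And>j. j < n \<Longrightarrow> A j p = v j * cnj (v p)"
proof -
  define a where "a = Re (A p p)"
  define s where "s = sqrt a"
  have App: "A p p = of_real a" using psd_fun_diag[OF A p] unfolding a_def by (simp add: complex_eq_iff)
  have s: "s > 0" "s * s = a" using pos unfolding s_def a_def by auto
  have v: "v i = A i p / of_real s" for i unfolding s_def a_def by (rule v_def)
  have vp: "v p = of_real s"
    using s by (simp add: v App flip: \<open>s * s = a\<close>)
  have cnj_v: "cnj (v j) = A p j / of_real s" if "j < n" for j
    unfolding v using psd_fun_hermitian[OF A that p] by simp
  show "A p j = v p * cnj (v j)" if "j < n" for j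
    using s by (simp add: vp cnj_v[OF that])
  show "A j p = v j * cnj (v p)" if "j < n" for j
    unfolding vp unfolding v using s by simp
  show "psd_fun n (\<lambda>i j. A i j - v i * cnj (v j))"
    unfolding psd_fun_def
  proof
    fix x
    define c where "c = (\<Sum>j<n. A p j * x j)"
    have "qform_fun n (\<lambda>i j. A i j - v i * cnj (v j)) x
        = qform_fun n A x - (\<Sum>i<n. \<Sum>j<n. cnj (x i) * v i * (cnj (v j) * x j))"
      unfolding qform_fun_def by (simp add: sum_subtractf algebra_simps)
    also have "(\<Sum>i<n. \<Sum>j<n. cnj (x i) * v i * (cnj (v j) * x j))
        = cnj (c / of_real s) * (c / of_real s)"
      unfolding c_def cnj_sum sum_product sum_divide_distrib
      by (intro sum.cong refl) (simp add: v cnj_v psd_fun_hermitian[OF A _ p] algebra_simps)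
    also have "\<dots> = of_real ((cmod (c / of_real s))\<^sup>2)"
      by (simp only: complex_norm_square mult.commute)
    also have "(cmod (c / of_real s))\<^sup>2 = (cmod c)\<^sup>2 / a"
      using s by (simp add: norm_divide power_divide power2_eq_square)
    finally have q: "qform_fun n (\<lambda>i j. A i j - v i * cnj (v j)) x = qform_fun n A x - of_real ((cmod c)\<^sup>2 / a)" .
    have "(cmod c)\<^sup>2 \<le> a * Re (qform_fun n A x)"
      using psd_fun_row_bound[OF A p] unfolding c_def a_def .
    then show "Im (qform_fun n (\<lambda>i j. A i j - v i * cnj (v j)) x) = 0 \<and>
        0 \<le> Re (qform_fun n (\<lambda>i j. A i j - v i * cnj (v j)) x)"
      using psd_funD[OF A, of x] pos unfolding q a_def by (simp add: field_simps)
  qed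
qed

text \<open>One step of a Cholesky elimination; a vanishing pivot forces its whole row and column to vanish.\<close>

lemma psd_fun_eliminate_pivot:
  assumes B: "psd_fun n B" and l: "l < n"
    and vanish: "\<And>i j. i < n \<Longrightarrow> j < n \<Longrightarrow> i < l \<or> j < l \<Longrightarrow> B i j = 0"
  obtains v where "psd_fun n (\<lambda>i j. B i j - v i * cnj (v j))"
    and "\<And>i j. i < n \<Longrightarrow> j < n \<Longrightarrow> i < Suc l \<or> j < Suc l \<Longrightarrow> B i j - v i * cnj (v j) = 0"
proof (cases "Re (B l l) > 0")
  case False
  then have "B l l = 0"
    using psd_fun_diag[OF B l] by (simp add: complex_eq_iff)
  then have "B i j = 0" if "i < n" "j < n" "i < Suc l \<or> j < Suc l" for i j
    using that vanish psd_fun_zero_diag_row[OF B l] by (metis less_Suc_eq)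
  with B show thesis by (intro that[of "\<lambda>_. 0"]) simp_all
next
  case True
  define v where "v i = B i l / of_real (sqrt (Re (B l l)))" for i
  note deflate = psd_fun_deflate[OF B l True v_def]
  have "v i = 0" if "i < l" for i
    using vanish that l unfolding v_def by simp
  then have "B i j - v i * cnj (v j) = 0" if "i < n" "j < n" "i < Suc l \<or> j < Suc l" for i j
    using that vanish deflate(2,3) by (cases "i < l \<or> j < l") (auto simp: less_Suc_eq)
  with deflate(1) show thesis by (rule that)
qed

lemma psd_fun_rank_one_decomposition:
  assumes "psd_fun n A"
  shows "\<exists>(m::nat) V. \<forall>i<n. \<forall>j<n. A i j = (\<Sum>k<m. V k i * cnj (V k j))"
proof -
  have "\<exists>(m::nat) V. \<forall>i<n. \<forall>j<n. B i j = (\<Sum>k<m. V k i * cnj (V k j))"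
    if "l \<le> n" "psd_fun n B" "\<And>i j. i < n \<Longrightarrow> j < n \<Longrightarrow> i < l \<or> j < l \<Longrightarrow> B i j = 0" for l B
    using that
  proof (induction l arbitrary: B rule: inc_induct)
    case base
    then have "\<forall>i<n. \<forall>j<n. B i j = (\<Sum>k<0::nat. V k i * cnj (V k j))" for V
      by (simp add: lessThan_0)
    then show ?case by blast
  next
    case (step l)
    obtain v where "psd_fun n (\<lambda>i j. B i j - v i * cnj (v j))"
      and "\<And>i j. i < n \<Longrightarrow> j < n \<Longrightarrow> i < Suc l \<or> j < Suc l \<Longrightarrow> B i j - v i * cnj (v j) = 0"
      using psd_fun_eliminate_pivot[OF step.prems(1) step.hyps(2) step.prems(2)] by blast
    then obtain m :: nat and V
      where V: "\<forall>i<n. \<forall>j<n. B i j - v i * cnj (v j) = (\<Sum>k<m. V k i * cnj (V k j))"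
      using step.IH by blast
    have "(\<Sum>k<Suc m. (V(m := v)) k i * cnj ((V(m := v)) k j))
        = (\<Sum>k<m. V k i * cnj (V k j)) + v i * cnj (v j)" for i j
      by simp
    with V have "\<forall>i<n. \<forall>j<n. B i j = (\<Sum>k<Suc m. (V(m := v)) k i * cnj ((V(m := v)) k j))"
      by (metis diff_add_cancel)
    then show ?case by blast
  qed
  with assms show ?thesis by blast
qed

lemma psd_fun_trace_mult_nonneg:
  assumes H: "psd_fun n H" and A: "psd_fun n A"
  shows "0 \<le> Re (\<Sum>a<n. \<Sum>b<n. H a b * A b a)"
proof -
  obtain m :: nat and V where V: "\<forall>i<n. \<forall>j<n. A i j = (\<Sum>k<m. V k i * cnj (V k j))"
    using psd_fun_rank_one_decomposition[OF A] by blast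
  have "(\<Sum>a<n. \<Sum>b<n. H a b * A b a) = (\<Sum>a<n. \<Sum>b<n. \<Sum>k<m. cnj (V k a) * H a b * V k b)"
    using V by (simp add: sum_distrib_left algebra_simps)
  also have "\<dots> = (\<Sum>a<n. \<Sum>k<m. \<Sum>b<n. cnj (V k a) * H a b * V k b)"
    by (intro sum.cong refl sum.swap)
  also have "\<dots> = (\<Sum>k<m. qform_fun n H (V k))"
    unfolding qform_fun_def by (rule sum.swap)
  finally show ?thesis
    using psd_funD(2)[OF H] by (simp add: sum_nonneg)
qed

section \<open>Off-diagonal blocks of an effect\<close>

lemma qform_fun_id_minus:
  "qform_fun n (\<lambda>i j. (if i = j then 1 else 0) - X i j) x
   = (\<Sum>i<n. cnj (x i) * x i) - qform_fun n X x"
  unfolding qform_fun_def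
  by (simp add: algebra_simps sum_subtractf if_distrib[where f="\<lambda>y. _ * y"]
      if_distrib[where f="\<lambda>y. y * _"] cong: if_cong)

lemma qform_fun_id_plus:
  "qform_fun n (\<lambda>i j. (if i = j then 1 else 0) + X i j) x
   = (\<Sum>i<n. cnj (x i) * x i) + qform_fun n X x"
  unfolding qform_fun_def
  by (simp add: algebra_simps sum.distrib if_distrib[where f="\<lambda>y. _ * y"]
      if_distrib[where f="\<lambda>y. y * _"] cong: if_cong)

lemma qform_fun_stack_diff:
  "qform_fun (N+N) F (\<lambda>k. if k < N then x k else x (k - N))
     - qform_fun (N+N) F (\<lambda>k. if k < N then x k else - x (k - N))
   = 2 * qform_fun N (\<lambda>a b. F a (N+b) + F (N+a) b) x"
  unfolding qform_fun_def sum_square_blocks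
  by (simp add: sum_subtractf[symmetric] sum_distrib_left sum.distrib[symmetric] algebra_simps)

lemma sum_cnj_mult_stack:
  "(\<Sum>k<(N::nat)+N. cnj (if k < N then x k else c * x (k - N)) * (if k < N then x k else c * x (k - N)))
   = (1 + cnj c * c) * (\<Sum>a<N. cnj (x a) * x a)"
  unfolding sum_lessThan_add_split by (simp add: sum_distrib_left algebra_simps sum.distrib)

lemma psd_fun_offdiag_blocks:
  assumes F: "psd_fun (N+N) F" and IF: "psd_fun (N+N) (\<lambda>i j. (if i = j then 1 else 0) - F i j)"
  defines "G \<equiv> \<lambda>a b. F a (N+b) + F (N+a) b"
  shows "psd_fun N (\<lambda>a b. (if a = b then 1 else 0) - G a b)"
    and "psd_fun N (\<lambda>a b. (if a = b then 1 else 0) + G a b)"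
proof -
  have bound: "Im (qform_fun N G x) = 0 \<and> Im S = 0 \<and> \<bar>Re (qform_fun N G x)\<bar> \<le> Re S"
    if S: "S = (\<Sum>a<N. cnj (x a) * x a)" for x S
  proof -
    define u where "u k = (if k < N then x k else x (k - N))" for k
    define w where "w k = (if k < N then x k else - x (k - N))" for k
    have norms: "(\<Sum>k<N+N. cnj (u k) * u k) = 2 * S" "(\<Sum>k<N+N. cnj (w k) * w k) = 2 * S"
      using sum_cnj_mult_stack[of N x 1] sum_cnj_mult_stack[of N x "-1"]
      unfolding u_def w_def S by (simp_all cong: if_cong)
    have F_range: "Im (qform_fun (N+N) F y) = 0" "0 \<le> Re (qform_fun (N+N) F y)"
      "Re (qform_fun (N+N) F y) \<le> Re (\<Sum>k<N+N. cnj (y k) * y k)" for y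
      using psd_funD[OF F, of y] psd_funD[OF IF, of y] unfolding qform_fun_id_minus by auto
    have "qform_fun N G x = (qform_fun (N+N) F u - qform_fun (N+N) F w) / 2"
      using qform_fun_stack_diff[of N F x] unfolding G_def u_def w_def by simp
    then have "Re (qform_fun N G x) = (Re (qform_fun (N+N) F u) - Re (qform_fun (N+N) F w)) / 2"
      "Im (qform_fun N G x) = (Im (qform_fun (N+N) F u) - Im (qform_fun (N+N) F w)) / 2"
      by (simp_all only: Re_divide_numeral Im_divide_numeral minus_complex.sel)
    moreover have "Im S = 0" unfolding S by (simp add: sum.distrib)
    ultimately show ?thesis
      using F_range[of u] F_range[of w] norms by auto
  qed
  have "Im (S - qform_fun N G x) = 0 \<and> 0 \<le> Re (S - qform_fun N G x)"
    "Im (S + qform_fun N G x) = 0 \<and> 0 \<le> Re (S + qform_fun N G x)"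
    if "S = (\<Sum>a<N. cnj (x a) * x a)" for x S
    using bound[OF that] by (auto simp: abs_le_iff)
  then show "psd_fun N (\<lambda>a b. (if a = b then 1 else 0) - G a b)"
    "psd_fun N (\<lambda>a b. (if a = b then 1 else 0) + G a b)"
    unfolding psd_fun_def qform_fun_id_minus qform_fun_id_plus by blast+
qed

lemma offdiag_blocks_trace_bound:
  assumes "psd_fun (N+N) F" "psd_fun (N+N) (\<lambda>i j. (if i = j then 1 else 0) - F i j)"
    and C: "psd_fun N C"
  shows "\<bar>Re (\<Sum>a<N. \<Sum>b<N. (F a (N+b) + F (N+a) b) * C b a)\<bar> \<le> Re (\<Sum>a<N. C a a)"
proof -
  let ?G = "\<lambda>a b. F a (N+b) + F (N+a) b"
  have trace_id: "(\<Sum>a<N. \<Sum>b<N. (if a = b then 1 else 0) * C b a) = (\<Sum>a<N. C a a)"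
    by (simp add: if_distrib[where f="\<lambda>y. y * _"] cong: if_cong)
  have "0 \<le> Re (\<Sum>a<N. \<Sum>b<N. ((if a = b then 1 else 0) - ?G a b) * C b a)"
    by (rule psd_fun_trace_mult_nonneg[OF psd_fun_offdiag_blocks(1)[OF assms(1,2)] C])
  moreover have "0 \<le> Re (\<Sum>a<N. \<Sum>b<N. ((if a = b then 1 else 0) + ?G a b) * C b a)"
    by (rule psd_fun_trace_mult_nonneg[OF psd_fun_offdiag_blocks(2)[OF assms(1,2)] C])
  ultimately show ?thesis
    by (simp add: left_diff_distrib distrib_right sum_subtractf sum.distrib trace_id)
qed

section \<open>Congruence by isometries\<close>

lemma cadj_carrier [simp]: "A \<in> carrier_mat r c \<Longrightarrow> cadj A \<in> carrier_mat c r"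
  unfolding cadj_def by (intro carrier_matI) auto

lemma cadj_dims [simp]: "dim_row (cadj A) = dim_col A" "dim_col (cadj A) = dim_row A"
  by (simp_all add: cadj_def)

lemma cadj_index [simp]: "i < dim_col A \<Longrightarrow> j < dim_row A \<Longrightarrow> cadj A $$ (i,j) = cnj (A $$ (j,i))"
  by (simp add: cadj_def)

lemma cadj_cadj [simp]: "cadj (cadj A) = A"
  by (rule eq_matI) auto

lemma mult_mat_index_sum:
  "A \<in> carrier_mat r c \<Longrightarrow> B \<in> carrier_mat c d \<Longrightarrow> i < r \<Longrightarrow> j < d \<Longrightarrow>
    (A * B) $$ (i,j) = (\<Sum>k<c. A $$ (i,k) * B $$ (k,j))"
  by (simp add: scalar_prod_def atLeast0LessThan)

lemma mtrace_mult:
  assumes "A \<in> carrier_mat r c" "B \<in> carrier_mat c r"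
  shows "mtrace (A * B) = (\<Sum>i<r. \<Sum>k<c. A $$ (i,k) * B $$ (k,i))"
  unfolding mtrace_def using assms by (intro sum.cong mult_mat_index_sum) auto

lemma mtrace_mult_commute:
  assumes "A \<in> carrier_mat r c" "B \<in> carrier_mat c r"
  shows "mtrace (A * B) = mtrace (B * A)"
  unfolding mtrace_mult[OF assms] mtrace_mult[OF assms(2,1)]
  by (subst sum.swap) (simp add: mult.commute)

lemma mult_mult_cadj_index:
  assumes B: "B \<in> carrier_mat r c" and A: "A \<in> carrier_mat c c" and "i < r" "j < r"
  shows "(B * A * cadj B) $$ (i,j) = (\<Sum>a<c. \<Sum>b<c. B $$ (i,a) * A $$ (a,b) * cnj (B $$ (j,b)))"
proof -
  have "(B * A * cadj B) $$ (i,j) = (\<Sum>b<c. (B * A) $$ (i,b) * cadj B $$ (b,j))"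
    using assms by (intro mult_mat_index_sum[of _ r c]) auto
  also have "\<dots> = (\<Sum>b<c. (\<Sum>a<c. B $$ (i,a) * A $$ (a,b)) * cnj (B $$ (j,b)))"
  proof (intro sum.cong refl)
    fix b assume "b \<in> {..<c}"
    with assms show "(B * A) $$ (i,b) * cadj B $$ (b,j)
        = (\<Sum>a<c. B $$ (i,a) * A $$ (a,b)) * cnj (B $$ (j,b))"
      by (subst mult_mat_index_sum[OF B A]) auto
  qed
  also have "\<dots> = (\<Sum>a<c. \<Sum>b<c. B $$ (i,a) * A $$ (a,b) * cnj (B $$ (j,b)))"
    by (simp add: sum_distrib_right) (rule sum.swap)
  finally show ?thesis .
qed

lemma qform_eq_qform_fun:
  "v \<in> carrier_vec n \<Longrightarrow> qform A v = qform_fun n (\<lambda>i j. A $$ (i,j)) (\<lambda>i. v $ i)"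
  by (simp add: qform_def qform_fun_def)

lemma psd_imp_psd_fun:
  assumes "psd n A"
  shows "psd_fun n (\<lambda>i j. A $$ (i,j))"
  unfolding psd_fun_def
proof
  fix x
  have "qform_fun n (\<lambda>i j. A $$ (i,j)) x = qform A (vec n x)"
    by (simp add: qform_eq_qform_fun qform_fun_def)
  then show "Im (qform_fun n (\<lambda>i j. A $$ (i,j)) x) = 0 \<and> 0 \<le> Re (qform_fun n (\<lambda>i j. A $$ (i,j)) x)"
    using assms unfolding psd_def by (metis vec_carrier)
qed

lemma qform_fun_congruence:
  "qform_fun r (\<lambda>i j. \<Sum>a<c. \<Sum>b<c. B i a * A a b * cnj (B j b)) x
   = qform_fun c A (\<lambda>a. \<Sum>i<r. cnj (B i a) * x i)"
proof -
  have "qform_fun r (\<lambda>i j. \<Sum>a<c. \<Sum>b<c. B i a * A a b * cnj (B j b)) x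
      = (\<Sum>i<r. \<Sum>j<r. \<Sum>a<c. \<Sum>b<c. cnj (x i) * B i a * A a b * cnj (B j b) * x j)"
    unfolding qform_fun_def by (simp add: sum_distrib_left sum_distrib_right algebra_simps)
  also have "\<dots> = (\<Sum>i<r. \<Sum>a<c. \<Sum>j<r. \<Sum>b<c. cnj (x i) * B i a * A a b * cnj (B j b) * x j)"
    by (intro sum.cong refl sum.swap)
  also have "\<dots> = (\<Sum>a<c. \<Sum>i<r. \<Sum>b<c. \<Sum>j<r. cnj (x i) * B i a * A a b * cnj (B j b) * x j)"
    by (subst sum.swap) (intro sum.cong refl sum.swap)
  also have "\<dots> = (\<Sum>a<c. \<Sum>b<c. \<Sum>i<r. \<Sum>j<r. cnj (x i) * B i a * A a b * cnj (B j b) * x j)"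
    by (intro sum.cong refl sum.swap)
  also have "\<dots> = qform_fun c A (\<lambda>a. \<Sum>i<r. cnj (B i a) * x i)"
    unfolding qform_fun_def by (simp add: cnj_sum sum_distrib_left sum_distrib_right algebra_simps)
  finally show ?thesis .
qed

lemma qform_congruence:
  assumes B: "B \<in> carrier_mat r c" and A: "A \<in> carrier_mat c c" and v: "v \<in> carrier_vec r"
  shows "qform (B * A * cadj B) v = qform A (cadj B *\<^sub>v v)"
proof -
  have Bv: "cadj B *\<^sub>v v \<in> carrier_vec c" using mult_mat_vec_carrier[OF cadj_carrier[OF B] v] .
  have "qform (B * A * cadj B) v
      = qform_fun r (\<lambda>i j. \<Sum>a<c. \<Sum>b<c. B $$ (i,a) * A $$ (a,b) * cnj (B $$ (j,b))) (\<lambda>i. v $ i)"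
    unfolding qform_eq_qform_fun[OF v] by (intro qform_fun_cong mult_mult_cadj_index[OF B A]) auto
  also have "\<dots> = qform_fun c (\<lambda>a b. A $$ (a,b)) (\<lambda>a. \<Sum>i<r. cnj (B $$ (i,a)) * v $ i)"
    by (rule qform_fun_congruence)
  also have "\<dots> = qform A (cadj B *\<^sub>v v)"
    unfolding qform_eq_qform_fun[OF Bv] using B v
    by (intro qform_fun_cong) (auto simp: scalar_prod_def atLeast0LessThan)
  finally show ?thesis .
qed

lemma psd_congruence:
  assumes B: "B \<in> carrier_mat r c" and A: "psd c A"
  shows "psd r (B * A * cadj B)"
proof -
  have "A \<in> carrier_mat c c" using A unfolding psd_def by auto
  moreover have "cadj B *\<^sub>v v \<in> carrier_vec c" if "v \<in> carrier_vec r" for v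
    using mult_mat_vec_carrier[OF cadj_carrier[OF B] that] .
  ultimately show ?thesis
    using A B unfolding psd_def by (auto simp: qform_congruence)
qed

lemma density_isometry_congruence:
  assumes B: "B \<in> carrier_mat r c" and iso: "cadj B * B = 1\<^sub>m c" and A: "density c A"
  shows "density r (B * A * cadj B)"
proof -
  have Ac: "A \<in> carrier_mat c c" using A unfolding density_def psd_def by auto
  have "mtrace (B * A * cadj B) = mtrace (cadj B * (B * A))"
    using B Ac by (intro mtrace_mult_commute[of _ r c]) auto
  also have "\<dots> = mtrace A"
    using B Ac iso by (simp flip: assoc_mult_mat[OF cadj_carrier[OF B] B Ac])
  finally show ?thesis
    using A psd_congruence[OF B] unfolding density_def by simp
qed

lemma effect_unitary_congruence:
  assumes E: "effect r E" and B: "B \<in> carrier_mat r c" and unitary: "cadj B * B = 1\<^sub>m c"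
  shows "effect c (cadj B * E * B)"
proof -
  have Ec: "E \<in> carrier_mat r r" using E unfolding effect_def psd_def by auto
  have "cadj B * (1\<^sub>m r - E) = cadj B - cadj B * E"
    using mult_minus_distrib_mat[OF cadj_carrier[OF B] one_carrier_mat Ec] B by simp
  then have "cadj B * (1\<^sub>m r - E) * B = 1\<^sub>m c - cadj B * E * B"
    using minus_mult_distrib_mat[OF cadj_carrier[OF B] mult_carrier_mat[OF cadj_carrier[OF B] Ec] B]
      unitary by simp
  then show ?thesis
    using E psd_congruence[OF cadj_carrier[OF B], unfolded cadj_cadj] unfolding effect_def by metis
qed

lemma accept_prob_congruence:
  assumes E: "E \<in> carrier_mat r r" and B: "B \<in> carrier_mat r c" and M: "M \<in> carrier_mat c c"
  shows "accept_prob E (B * M * cadj B) = accept_prob (cadj B * E * B) M"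
proof -
  have B': "cadj B \<in> carrier_mat c r" using B by simp
  have EB: "E * B \<in> carrier_mat r c" and MB: "M * cadj B \<in> carrier_mat c r" using E B M by auto
  have "mtrace (E * (B * M * cadj B)) = mtrace ((E * B * M) * cadj B)"
    by (simp add: assoc_mult_mat[OF B M B'] assoc_mult_mat[OF E B MB] assoc_mult_mat[OF EB M B'])
  also have "\<dots> = mtrace (cadj B * (E * B * M))"
    using EB M B' by (intro mtrace_mult_commute[of _ r c]) auto
  also have "\<dots> = mtrace (cadj B * E * B * M)"
    by (simp add: assoc_mult_mat[OF B' E B] assoc_mult_mat[OF B' EB M])
  finally show ?thesis unfolding accept_prob_def by simp
qed

lemma effect_imp_psd_fun:
  assumes "effect n E"
  shows "psd_fun n (\<lambda>i j. E $$ (i,j))" "psd_fun n (\<lambda>i j. (if i = j then 1 else 0) - E $$ (i,j))"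
proof -
  have "E \<in> carrier_mat n n" using assms unfolding effect_def psd_def by auto
  then have "psd_fun n (\<lambda>i j. (1\<^sub>m n - E) $$ (i,j)) = psd_fun n (\<lambda>i j. (if i = j then 1 else 0) - E $$ (i,j))"
    by (intro psd_fun_cong) auto
  then show "psd_fun n (\<lambda>i j. E $$ (i,j))" "psd_fun n (\<lambda>i j. (if i = j then 1 else 0) - E $$ (i,j))"
    using assms psd_imp_psd_fun unfolding effect_def by auto
qed

section \<open>The Pauli, embedding and permutation matrices\<close>

lemma kron_dims [simp]:
  "dim_row (kron A B) = dim_row A * dim_row B" "dim_col (kron A B) = dim_col A * dim_col B"
  by (simp_all add: kron_def)

lemma kron_index:
  "i < dim_row A * dim_row B \<Longrightarrow> j < dim_col A * dim_col B \<Longrightarrow>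
    kron A B $$ (i,j) = A $$ (i div dim_row B, j div dim_col B) * B $$ (i mod dim_row B, j mod dim_col B)"
  by (simp add: kron_def)

lemma mod_less_of_less_mult: "i < a * (b::nat) \<Longrightarrow> i mod b < b"
  by (metis mod_less_divisor mult_0_right neq0_conv not_less0)

lemma cadj_kron: "cadj (kron A B) = kron (cadj A) (cadj B)"
  by (rule eq_matI) (simp_all add: kron_index less_mult_imp_div_less mod_less_of_less_mult)

lemma kron_mult:
  assumes "dim_col A = dim_row C" "dim_col B = dim_row D"
  shows "kron A B * kron C D = kron (A * C) (B * D)"
proof (rule eq_matI)
  fix i j assume "i < dim_row (kron (A * C) (B * D))" "j < dim_col (kron (A * C) (B * D))"
  then have i: "i < dim_row A * dim_row B" and j: "j < dim_col C * dim_col D" by simp_all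
  let ?cA = "dim_col A" and ?cB = "dim_col B"
  have "(kron A B * kron C D) $$ (i,j) = (\<Sum>k<?cA * ?cB. kron A B $$ (i,k) * kron C D $$ (k,j))"
    using i j assms by (intro mult_mat_index_sum) (auto intro: carrier_matI)
  also have "\<dots> = (\<Sum>k1<?cA. \<Sum>k2<?cB. kron A B $$ (i,k1*?cB+k2) * kron C D $$ (k1*?cB+k2,j))"
    by (rule sum_lessThan_mult_split)
  also have "\<dots> = (\<Sum>k1<?cA. \<Sum>k2<?cB. (A $$ (i div dim_row B, k1) * C $$ (k1, j div dim_col D)) *
        (B $$ (i mod dim_row B, k2) * D $$ (k2, j mod dim_col D)))"
  proof (intro sum.cong refl)
    fix k1 k2 assume k: "k1 \<in> {..<?cA}" "k2 \<in> {..<?cB}"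
    have "k1 * ?cB + k2 < (k1 + 1) * ?cB" using k by simp
    also have "\<dots> \<le> ?cA * ?cB" using k by (intro mult_right_mono) auto
    finally have "k1 * ?cB + k2 < ?cA * ?cB" .
    moreover have "(k1 * ?cB + k2) div ?cB = k1" "(k1 * ?cB + k2) mod ?cB = k2" using k by auto
    ultimately show "kron A B $$ (i,k1*?cB+k2) * kron C D $$ (k1*?cB+k2,j)
        = (A $$ (i div dim_row B, k1) * C $$ (k1, j div dim_col D)) *
          (B $$ (i mod dim_row B, k2) * D $$ (k2, j mod dim_col D))"
      using i j assms by (simp add: kron_index ac_simps)
  qed
  also have "\<dots> = (A * C) $$ (i div dim_row B, j div dim_col D) * (B * D) $$ (i mod dim_row B, j mod dim_col D)"
    using i j assms
    by (simp add: sum_product[symmetric] less_mult_imp_div_less mod_less_of_less_mult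
        scalar_prod_def atLeast0LessThan)
  also have "\<dots> = kron (A * C) (B * D) $$ (i,j)"
    using i j by (simp add: kron_index)
  finally show "(kron A B * kron C D) $$ (i,j) = kron (A * C) (B * D) $$ (i,j)" .
qed simp_all

lemma kron_one: "kron (1\<^sub>m a) (1\<^sub>m b) = 1\<^sub>m (a * b)"
proof (rule eq_matI)
  fix i j assume "i < dim_row (1\<^sub>m (a * b))" "j < dim_col (1\<^sub>m (a * b))"
  then have ij: "i < a * b" "j < a * b" by simp_all
  have "(i div b = j div b \<and> i mod b = j mod b) = (i = j)"
    by (metis div_mult_mod_eq)
  then show "kron (1\<^sub>m a) (1\<^sub>m b) $$ (i, j) = 1\<^sub>m (a * b) $$ (i, j)"
    using ij by (auto simp: kron_index less_mult_imp_div_less mod_less_of_less_mult)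
qed simp_all

definition pauli_gate :: "bool \<Rightarrow> bool \<Rightarrow> complex mat" where
  "pauli_gate a b = (if a then pauliX else 1\<^sub>m 2) * (if b then pauliZ else 1\<^sub>m 2)"

lemma pauli_gate_dims [simp]: "dim_row (pauli_gate a b) = 2" "dim_col (pauli_gate a b) = 2"
  by (simp_all add: pauli_gate_def pauliX_def pauliZ_def)

lemma pauli_gate_unitary: "cadj (pauli_gate a b) * pauli_gate a b = 1\<^sub>m 2"
proof -
  have two: "(i::nat) < 2 \<longleftrightarrow> i = 0 \<or> i = 1" for i by auto
  have sum2: "(\<Sum>k\<in>{0..<2::nat}. f k) = f 0 + f 1" for f :: "nat \<Rightarrow> complex"
    by (simp add: numeral_2_eq_2)
  show ?thesis
    by (rule eq_matI) (auto simp: pauli_gate_def pauliX_def pauliZ_def two scalar_prod_def sum2 cadj_def)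
qed

lemma pauliU_carrier: "pauliU k \<in> carrier_mat (2^(length k div 2)) (2^(length k div 2))"
  by (induction k rule: pauliU.induct) (auto simp: pauli_gate_def[symmetric] intro: carrier_matI)

lemma pauliU_unitary: "cadj (pauliU k) * pauliU k = 1\<^sub>m (2^(length k div 2))"
proof (induction k rule: pauliU.induct)
  case (3 a b k)
  have U: "pauliU k \<in> carrier_mat (2^(length k div 2)) (2^(length k div 2))" by (rule pauliU_carrier)
  have "cadj (pauliU (a # b # k)) * pauliU (a # b # k)
      = kron (cadj (pauli_gate a b)) (cadj (pauliU k)) * kron (pauli_gate a b) (pauliU k)"
    by (simp add: pauli_gate_def[symmetric] cadj_kron)
  also have "\<dots> = kron (cadj (pauli_gate a b) * pauli_gate a b) (cadj (pauliU k) * pauliU k)"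
    using U by (intro kron_mult) auto
  finally show ?case by (simp add: pauli_gate_unitary 3 kron_one)
qed (rule eq_matI; auto simp: cadj_def scalar_prod_def)+

lemma padV_carrier: "padV d1 d2 \<in> carrier_mat (2^d1) (2^d2)"
  unfolding padV_def by (intro carrier_matI) simp_all

lemma padV_isometry:
  assumes "d2 \<le> d1"
  shows "cadj (padV d1 d2) * padV d1 d2 = 1\<^sub>m (2^d2)"
proof (rule eq_matI)
  fix i j assume "i < dim_row (1\<^sub>m (2 ^ d2))" "j < dim_col (1\<^sub>m (2 ^ d2))"
  then have ij: "i < 2^d2" "j < 2^d2" by auto
  define m where "m = (2::nat)^(d1-d2)"
  have "i * m < 2^d2 * m" using ij by (simp add: m_def)
  also have "2^d2 * m = (2::nat)^d1" unfolding m_def using assms by (simp flip: power_add)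
  finally have im: "i * m < 2^d1" .
  have "(cadj (padV d1 d2) * padV d1 d2) $$ (i,j)
      = (\<Sum>k<2^d1. cnj (padV d1 d2 $$ (k,i)) * padV d1 d2 $$ (k,j))"
    using ij padV_carrier[of d1 d2] by (subst mult_mat_index_sum[of _ "2^d2" "2^d1" _ "2^d2"]) auto
  also have "\<dots> = (\<Sum>k<2^d1. if k = i * m then (if k = j * m then 1 else 0) else 0)"
    using ij by (intro sum.cong refl) (auto simp: padV_def m_def)
  also have "\<dots> = (if i = j then 1 else 0)"
    using im by (simp add: sum.delta m_def)
  finally show "(cadj (padV d1 d2) * padV d1 d2) $$ (i,j) = 1\<^sub>m (2 ^ d2) $$ (i,j)" using ij by simp
qed (auto simp: padV_def)

lemma perm_mat_carrier: "perm_mat n \<sigma> \<in> carrier_mat n n"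
  unfolding perm_mat_def by (intro carrier_matI) simp_all

lemma perm_mat_unitary:
  assumes "\<sigma> permutes {..<n}"
  shows "cadj (perm_mat n \<sigma>) * perm_mat n \<sigma> = 1\<^sub>m n"
proof (rule eq_matI)
  fix i j assume "i < dim_row (1\<^sub>m n)" "j < dim_col (1\<^sub>m n)"
  then have ij: "i < n" "j < n" by auto
  have "(cadj (perm_mat n \<sigma>) * perm_mat n \<sigma>) $$ (i,j)
      = (\<Sum>k<n. cnj (perm_mat n \<sigma> $$ (k,i)) * perm_mat n \<sigma> $$ (k,j))"
    using ij perm_mat_carrier[of n \<sigma>] by (subst mult_mat_index_sum[of _ n n _ n]) auto
  also have "\<dots> = (\<Sum>k<n. if k = \<sigma> i then (if k = \<sigma> j then 1 else 0) else 0)"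
    using ij by (intro sum.cong) (auto simp: perm_mat_def)
  also have "\<dots> = (if i = j then 1 else 0)"
    using ij permutes_in_image[OF assms] permutes_inj[OF assms]
    by (simp add: sum.delta inj_eq)
  finally show "(cadj (perm_mat n \<sigma>) * perm_mat n \<sigma>) $$ (i,j) = 1\<^sub>m n $$ (i,j)" using ij by simp
qed (auto simp: perm_mat_def)

section \<open>Indistinguishability of the ciphertexts\<close>

lemma accept_prob_offdiag_perturbation:
  fixes t :: real
  assumes E: "effect (N+N) E" and C: "density N C" and A: "A \<in> carrier_mat N N"
  shows "\<bar>accept_prob E (four_block_mat A (0\<^sub>m N N) (0\<^sub>m N N) A)
          - accept_prob E (four_block_mat A (of_real t \<cdot>\<^sub>m C) (of_real t \<cdot>\<^sub>m cadj C) A)\<bar> \<le> \<bar>t\<bar>"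
proof -
  define M0 where "M0 = four_block_mat A (0\<^sub>m N N) (0\<^sub>m N N) A"
  define M1 where "M1 = four_block_mat A (of_real t \<cdot>\<^sub>m C) (of_real t \<cdot>\<^sub>m cadj C) A"
  define S where "S = (\<Sum>a<N. \<Sum>b<N. (E $$ (a,N+b) + E $$ (N+a,b)) * C $$ (b,a))"
  have Ec: "E \<in> carrier_mat (N+N) (N+N)" using E unfolding effect_def psd_def by auto
  have Cc: "C \<in> carrier_mat N N" and C_psd: "psd_fun N (\<lambda>i j. C $$ (i,j))"
    and C_trace: "(\<Sum>a<N. C $$ (a,a)) = 1"
    using C psd_imp_psd_fun unfolding density_def psd_def mtrace_def by auto
  have M0c: "M0 \<in> carrier_mat (N+N) (N+N)" and M1c: "M1 \<in> carrier_mat (N+N) (N+N)"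
    unfolding M0_def M1_def using A Cc by auto
  have "mtrace (E * M0) - mtrace (E * M1)
      = (\<Sum>i<N+N. \<Sum>k<N+N. E $$ (i,k) * (M0 $$ (k,i) - M1 $$ (k,i)))"
    unfolding mtrace_mult[OF Ec M0c] mtrace_mult[OF Ec M1c]
    by (simp add: sum_subtractf right_diff_distrib)
  also have "\<dots> = (\<Sum>a<N. \<Sum>b<N. - of_real t * ((E $$ (a,N+b) + E $$ (N+a,b)) * C $$ (b,a)))"
    unfolding sum_square_blocks
  proof (intro sum.cong refl)
    fix a b assume "a \<in> {..<N}" "b \<in> {..<N}"
    then show "E $$ (a,b) * (M0 $$ (b,a) - M1 $$ (b,a)) + E $$ (a,N+b) * (M0 $$ (N+b,a) - M1 $$ (N+b,a))
        + E $$ (N+a,b) * (M0 $$ (b,N+a) - M1 $$ (b,N+a))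
        + E $$ (N+a,N+b) * (M0 $$ (N+b,N+a) - M1 $$ (N+b,N+a))
        = - of_real t * ((E $$ (a,N+b) + E $$ (N+a,b)) * C $$ (b,a))"
      using A Cc psd_fun_hermitian[OF C_psd, of a b]
      by (simp add: M0_def M1_def algebra_simps)
  qed
  also have "\<dots> = - of_real t * S"
    unfolding S_def by (simp add: sum_distrib_left)
  finally have "mtrace (E * M0) - mtrace (E * M1) = - of_real t * S" .
  then have "accept_prob E M0 - accept_prob E M1 = - t * Re S"
    unfolding accept_prob_def by (simp flip: minus_complex.sel(1))
  moreover have "\<bar>Re S\<bar> \<le> 1"
    using offdiag_blocks_trace_bound[OF effect_imp_psd_fun[OF E] C_psd] C_trace unfolding S_def by simp
  ultimately show ?thesis
    unfolding M0_def[symmetric] M1_def[symmetric] by (simp add: abs_mult mult_left_le)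
qed

theorem theorem14:
  fixes d1 d2 \<eta> :: nat and \<epsilon> :: real
    and Mo Mc :: "complex mat" and k k' :: "bool list" and \<sigma> :: "nat \<Rightarrow> nat"
    and Mo' Mc' Mc'' Ma0 Ma1 Mf0 Mf1 :: "complex mat"
  assumes d: "d1 \<ge> d2" "d2 \<ge> 1"
    and Mo: "pos_def (2^d1) Mo" "density (2^d1) Mo"
    and Mc: "density (2^d2) Mc"
    and k: "length k = 2 * d1" and k': "length k' = 2 * d2"
    and \<sigma>: "\<sigma> permutes {..<2^(d1+1)}"
    and Mo'_def: "Mo' = pauliU k * Mo * cadj (pauliU k)"
    and Mc'_def: "Mc' = pauliU k' * Mc * cadj (pauliU k')"
    and Mc''_def: "Mc'' = padV d1 d2 * Mc' * cadj (padV d1 d2)"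
    and Ma0_def: "Ma0 = four_block_mat ((1/2) \<cdot>\<^sub>m Mo') (0\<^sub>m (2^d1) (2^d1))
                                        (0\<^sub>m (2^d1) (2^d1)) ((1/2) \<cdot>\<^sub>m Mo')"
    and Ma1_def: "Ma1 = four_block_mat ((1/2) \<cdot>\<^sub>m Mo') ((1 / of_nat \<eta>) \<cdot>\<^sub>m Mc'')
                                        ((1 / of_nat \<eta>) \<cdot>\<^sub>m cadj Mc'') ((1/2) \<cdot>\<^sub>m Mo')"
    and Mf0_def: "Mf0 = perm_mat (2^(d1+1)) \<sigma> * Ma0 * cadj (perm_mat (2^(d1+1)) \<sigma>)"
    and Mf1_def: "Mf1 = perm_mat (2^(d1+1)) \<sigma> * Ma1 * cadj (perm_mat (2^(d1+1)) \<sigma>)"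
    and \<epsilon>: "\<epsilon> > 0"
    and \<eta>: "\<eta> > 0" "1 / real \<eta> < \<epsilon>"
    and \<eta>2: "1 / (real \<eta>)\<^sup>2 * opnorm (Mc'' * minv Mo' * Mc'') \<le> 1/4 * lambda_min Mo'"
  shows "\<forall>E. effect (2^(d1+1)) E \<longrightarrow> \<bar>accept_prob E Mf0 - accept_prob E Mf1\<bar> < \<epsilon>"
proof (intro allI impI)
  fix E assume E: "effect (2^(d1+1)) E"
  define N where "N = (2::nat)^d1"
  define P where "P = perm_mat (N+N) \<sigma>"
  have NN: "(2::nat)^(d1+1) = N+N" unfolding N_def by simp
  have P: "P \<in> carrier_mat (N+N) (N+N)" "cadj P * P = 1\<^sub>m (N+N)"
    unfolding P_def using perm_mat_carrier perm_mat_unitary \<sigma> NN by metis+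
  have Mo': "Mo' \<in> carrier_mat N N"
    using pauliU_carrier[of k] Mo(2) k unfolding Mo'_def N_def density_def psd_def by auto
  have "density (2^d2) Mc'"
    using density_isometry_congruence[OF pauliU_carrier pauliU_unitary, of k' Mc] Mc k'
    unfolding Mc'_def by simp
  then have Mc'': "density N Mc''"
    unfolding Mc''_def N_def by (rule density_isometry_congruence[OF padV_carrier padV_isometry[OF d(1)]])
  have Ma: "Ma0 \<in> carrier_mat (N+N) (N+N)" "Ma1 \<in> carrier_mat (N+N) (N+N)"
    unfolding Ma0_def Ma1_def N_def[symmetric] using Mo' Mc'' unfolding density_def psd_def by auto
  have "\<bar>accept_prob E Mf0 - accept_prob E Mf1\<bar>
      = \<bar>accept_prob (cadj P * E * P) Ma0 - accept_prob (cadj P * E * P) Ma1\<bar>"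
    unfolding Mf0_def Mf1_def NN P_def[symmetric]
    using E[unfolded NN] effect_def psd_def accept_prob_congruence[OF _ P(1)] Ma by auto
  also have "\<dots> \<le> \<bar>1 / real \<eta>\<bar>"
    using accept_prob_offdiag_perturbation[OF effect_unitary_congruence[OF E[unfolded NN] P] Mc'',
        of "(1/2) \<cdot>\<^sub>m Mo'" "1 / real \<eta>"] Mo'
    unfolding Ma0_def Ma1_def N_def by simp
  also have "\<dots> < \<epsilon>" using \<eta> by simp
  finally show "\<bar>accept_prob E Mf0 - accept_prob E Mf1\<bar> < \<epsilon>" .
qed

end
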